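(* Fix $\alpha \in (0,1/2)$, $m$, $n$. There is $T_0$ such that for all $T \ge T_0$ and every run of Algorithm 1 in which the small gradient assumption holds, for all $i \in [m]$ and $t \in [T]$: (1) $(w_i^t)^\alpha \ge 4\eta\gamma$ and $w_i^t \ge \frac{1}{10\sqrt{m}} T^{1/(2(\alpha-1))}$; (2) $-32 (w_i^t)^{1-\alpha}\eta\gamma \le w_i^t - w_i^{t+1} \le 2 (w_i^t)^{2-\alpha}(m+1)\eta\gamma$.
   Context: Setting. There are $m$ experts and $n$ outcomes; $\Delta^k$ is the probability simplex in $\mathbb{R}^k$. For reports $\mathbf{p}^1,\dots,\mathbf{p}^m\in\Delta^n$ and $\mathbf{w}\in\Delta^m$, the logarithmic pool is $p^*_j(\mathbf{w}) = \frac{\prod_k (p^k_j)^{w_k}}{\sum_{\ell}\prod_k (p^k_\ell)^{w_k}}$. At each time $t\in[T]$, reports $\mathbf{p}^{t,1},\dots,\mathbf{p}^{t,m}$ and an outcome $j_t$ are revealed, with loss $L^t(\mathbf{w}) := -\ln p^*_{j_t}(\mathbf{w})$ and, by convention, $\partial_i L^t(\mathbf{w}) := \sum_{\ell} p^*_\ell(\mathbf{w}) \ln p^{t,i}_\ell - \ln p^{t,i}_{j_t}$. Algorithm 1 (parameter $\alpha \in (0,1/2)$): $R(\mathbf{w}) = -\frac{1}{\alpha}\sum_i w_i^\alpha$, $\eta = \frac{1}{\sqrt{T}\ln T}\cdot\frac{1}{12 m^{(1+\alpha)/2} n}$, $\mathbf{w}^1 = (1/m,\dots,1/m)$, $\eta_0=+\infty$.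 For $t=1,\dots,T$: if $\eta \le \min_i (w_i^t)^\alpha$ set $\eta_t = \min(\eta_{t-1},\eta)$, else $\eta_t = \min(\eta_{t-1}, \min_i w_i^t)$; then $\mathbf{w}^{t+1}\in\Delta^m$ is defined by $-(w_i^{t+1})^{\alpha-1} = -(w_i^t)^{\alpha-1} - \eta_t\partial_i L^t(\mathbf{w}^t) + c$ for all $i$, with $c$ the unique constant making $\sum_i w_i^{t+1}=1$. Let $\gamma := 12 n \ln T$. The small gradient assumption holds for a run if for every $t\in[T]$ and $i\in[m]$: $-\frac{\gamma}{w_i^t} \le \partial_i L^t(\mathbf{w}^t) \le \gamma$. *)

theory Defs
  imports Complex_Main
begin

text \<open>Vectors are functions nat => real, indexed by 1..k.
  Reports: P t i l = probability assigned by expert i at time t to outcome l. Weights: w t i = weight of expert i at time t.\<close>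

definition in_simplex :: "nat \<Rightarrow> (nat \<Rightarrow> real) \<Rightarrow> bool" where
  "in_simplex k v \<longleftrightarrow> (\<forall>i\<in>{1..k}. 0 \<le> v i) \<and> (\<Sum>i=1..k. v i) = 1"

definition logpool :: "nat \<Rightarrow> nat \<Rightarrow> (nat \<Rightarrow> nat \<Rightarrow> real) \<Rightarrow> (nat \<Rightarrow> real) \<Rightarrow> nat \<Rightarrow> real" where
  "logpool m n p w j =
     (\<Prod>k=1..m. p k j powr w k) / (\<Sum>l=1..n. \<Prod>k=1..m. p k l powr w k)"

definition loss_grad :: "nat \<Rightarrow> nat \<Rightarrow> (nat \<Rightarrow> nat \<Rightarrow> real) \<Rightarrow> nat \<Rightarrow> (nat \<Rightarrow> real) \<Rightarrow> nat \<Rightarrow> real" where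
  "loss_grad m n p j w i =
     (\<Sum>l=1..n. logpool m n p w l * ln (p i l)) - ln (p i j)"

definition alg_eta :: "real \<Rightarrow> nat \<Rightarrow> nat \<Rightarrow> nat \<Rightarrow> real" where
  "alg_eta \<alpha> m n T =
     (1 / (sqrt (real T) * ln (real T))) * (1 / (12 * real m powr ((1 + \<alpha>) / 2) * real n))"

definition alg_gamma :: "nat \<Rightarrow> nat \<Rightarrow> real" where
  "alg_gamma n T = 12 * real n * ln (real T)"

definition eta_cand :: "real \<Rightarrow> nat \<Rightarrow> real \<Rightarrow> (nat \<Rightarrow> nat \<Rightarrow> real) \<Rightarrow> nat \<Rightarrow> real" where
  "eta_cand \<alpha> m \<eta> w s =
     (if \<eta> \<le> Min ((\<lambda>i. w s i powr \<alpha>) ` {1..m}) then \<eta> else Min ((\<lambda>i. w s i) ` {1..m}))"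

text \<open>eta_t = min(eta_{t-1}, cand_t) with eta_0 = +infinity, i.e. the minimum of cand_1..cand_t.\<close>
definition eta_t :: "real \<Rightarrow> nat \<Rightarrow> real \<Rightarrow> (nat \<Rightarrow> nat \<Rightarrow> real) \<Rightarrow> nat \<Rightarrow> real" where
  "eta_t \<alpha> m \<eta> w t = Min ((\<lambda>s. eta_cand \<alpha> m \<eta> w s) ` {1..t})"

definition alg1_run :: "real \<Rightarrow> nat \<Rightarrow> nat \<Rightarrow> nat \<Rightarrow> (nat \<Rightarrow> nat \<Rightarrow> nat \<Rightarrow> real)
    \<Rightarrow> (nat \<Rightarrow> nat) \<Rightarrow> (nat \<Rightarrow> nat \<Rightarrow> real) \<Rightarrow> bool" where
  "alg1_run \<alpha> m n T P J w \<longleftrightarrow>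
     (\<forall>t\<in>{1..T}. \<forall>i\<in>{1..m}. in_simplex n (P t i) \<and> (\<forall>l\<in>{1..n}. 0 < P t i l)) \<and>
     (\<forall>t\<in>{1..T}. J t \<in> {1..n}) \<and>
     (\<forall>i\<in>{1..m}. w 1 i = 1 / real m) \<and>
     (\<forall>t\<in>{1..T}.
        in_simplex m (w (Suc t)) \<and> (\<forall>i\<in>{1..m}. 0 < w (Suc t) i) \<and>
        (\<exists>c. \<forall>i\<in>{1..m}.
           - (w (Suc t) i powr (\<alpha> - 1)) =
             - (w t i powr (\<alpha> - 1))
             - eta_t \<alpha> m (alg_eta \<alpha> m n T) w t * loss_grad m n (P t) (J t) (w t) i + c))"

definition small_gradient :: "nat \<Rightarrow> nat \<Rightarrow> nat \<Rightarrow> (nat \<Rightarrow> nat \<Rightarrow> nat \<Rightarrow> real)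
    \<Rightarrow> (nat \<Rightarrow> nat) \<Rightarrow> (nat \<Rightarrow> nat \<Rightarrow> real) \<Rightarrow> bool" where
  "small_gradient m n T P J w \<longleftrightarrow>
     (\<forall>t\<in>{1..T}. \<forall>i\<in>{1..m}.
        - alg_gamma n T / w t i \<le> loss_grad m n (P t) (J t) (w t) i \<and>
        loss_grad m n (P t) (J t) (w t) i \<le> alg_gamma n T)"

end

theory Submission
  imports Defs "HOL-Analysis.Derivative"
begin

text \<open>Write the update as w'(i) powr (\<alpha> - 1) = w(i) powr (\<alpha> - 1) + (a(i) - c), where
  a(i) = \<eta>_t \<partial>_i L^t lies in [-\<eta>\<gamma> / w(i), \<eta>\<gamma>] by the small gradient assumption and c is the
  normalizer. While every weight satisfies w(i) powr \<alpha> \<ge> 4\<eta>\<gamma>, the normalizer lies in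
  [-(m + 1 - 2\<alpha>)\<eta>\<gamma>, \<eta>\<gamma>]: from above because some weight does not grow, from below because
  otherwise a second order bound on (1 + x) powr (1 / (\<alpha> - 1)) and Chebyshev's sum inequality
  would make the new weights sum to more than 1. So each step raises w(i) powr (\<alpha> - 1) by at most
  (m + 2 - 2\<alpha>)\<eta>\<gamma>, and Bernoulli-type bounds on (1 + x) powr (1 / (\<alpha> - 1)) give the bounds
  on w(i) - w'(i). After at most T steps w(i) powr (\<alpha> - 1) \<le> (10 sqrt m) powr (1 - \<alpha>) * sqrt T,
  which for large T yields both the lower bound on w(i) and w(i) powr \<alpha> \<ge> 4\<eta>\<gamma>, so the
  induction closes.\<close>

lemma convex_on_powr_outside_unit_interval:
  fixes p :: real
  assumes "p \<le> 0 \<or> 1 \<le> p"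
  shows "convex_on {0<..} (\<lambda>x. x powr p)"
proof (rule f''_ge0_imp_convex)
  fix x :: real assume "x \<in> {0<..}"
  then show "((\<lambda>x. x powr p) has_real_derivative p * x powr (p - 1)) (at x)"
    and "((\<lambda>x. p * x powr (p - 1)) has_real_derivative p * ((p - 1) * x powr (p - 1 - 1))) (at x)"
    by (auto intro!: derivative_eq_intros)
  have "0 \<le> p * (p - 1)"
    using assms by (auto simp: zero_le_mult_iff)
  then show "0 \<le> p * ((p - 1) * x powr (p - 1 - 1))"
    by (simp add: mult.assoc[symmetric])
qed simp

lemma powr_ge_tangent_at_1:
  fixes p y :: real
  assumes "0 < y" and "p \<le> 0 \<or> 1 \<le> p"
  shows "1 + p * (y - 1) \<le> y powr p"
proof -
  have "p * (y - 1) \<le> y powr p - 1 powr p"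
    by (rule convex_on_imp_above_tangent[OF convex_on_powr_outside_unit_interval[OF assms(2)]])
       (use assms(1) in \<open>auto simp: connected_Ioi interior_open intro!: derivative_eq_intros\<close>)
  then show ?thesis by simp
qed

lemma one_plus_powr_le_quadratic:
  fixes p x :: real
  assumes "-2 \<le> p" "p \<le> -1" and "\<bar>x\<bar> \<le> 1/4"
  shows "(1 + x) powr p \<le> 1 + p * x + 8 * x\<^sup>2"
proof -
  have "\<bar>p * x\<bar> \<le> 2 * (1/4)"
    unfolding abs_mult using assms by (intro mult_mono) auto
  then have qx: "-1/2 \<le> p * x" "p * x \<le> 1/2"
    by (auto simp: abs_le_iff)
  have "1 - p * x \<le> (1 + x) powr (-p)"
    using powr_ge_tangent_at_1[of "1 + x" "-p"] assms by auto
  then have "inverse ((1 + x) powr (-p)) \<le> inverse (1 - p * x)"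
    using qx by (intro le_imp_inverse_le) auto
  then have "(1 + x) powr p \<le> inverse (1 - p * x)"
    by (simp add: powr_minus)
  also have "\<dots> \<le> 1 + p * x + 8 * x\<^sup>2"
  proof -
    have "(-p)\<^sup>2 \<le> 2\<^sup>2"
      using assms by (intro power_mono) auto
    then have "p\<^sup>2 \<le> 4" by simp
    then have "0 \<le> x\<^sup>2 * (8 - p\<^sup>2 - 8 * (p * x))"
      using qx by (intro mult_nonneg_nonneg) auto
    then have "1 \<le> (1 - p * x) * (1 + p * x + 8 * x\<^sup>2)"
      by (simp add: algebra_simps power2_eq_square)
    then show ?thesis
      using qx by (simp add: field_simps)
  qed
  finally show ?thesis .
qed

lemma one_plus_powr_le_linear:
  fixes p x :: real
  assumes "-2 \<le> p" "p \<le> 0" and "-1/2 \<le> x"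
  shows "(1 + x) powr p \<le> 1 + 6 * max 0 (-x)"
proof (cases "0 \<le> x")
  case True
  then have "(1 + x) powr p \<le> 1 powr p"
    using assms by (intro powr_mono2') auto
  then show ?thesis by simp
next
  case False
  define y where "y = 1 + x"
  have y: "1/2 \<le> y" "y < 1" using False assms by (auto simp: y_def)
  have "y powr p \<le> y powr (-2)"
    using y assms by (intro powr_mono') auto
  also have "\<dots> = inverse (y\<^sup>2)"
    using y by (simp add: powr_minus powr_numeral)
  also have "\<dots> \<le> 7 - 6 * y"
  proof -
    have "0 \<le> (1 - y) * (2 * y - 1) * (3 * y + 1)"
      using y by (intro mult_nonneg_nonneg) auto
    then have "1 \<le> y\<^sup>2 * (7 - 6 * y)"
      by (simp add: algebra_simps power2_eq_square)
    then show ?thesis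
      using y by (simp add: field_simps)
  qed
  finally show ?thesis using False by (simp add: y_def)
qed

lemma Chebyshev_sum_similarly_ordered:
  fixes f g :: "'a \<Rightarrow> real"
  assumes "finite I" and "\<And>i j. i \<in> I \<Longrightarrow> j \<in> I \<Longrightarrow> 0 \<le> (f i - f j) * (g i - g j)"
  shows "sum f I * sum g I \<le> card I * (\<Sum>i\<in>I. f i * g i)"
proof -
  have "2 * (card I * (\<Sum>i\<in>I. f i * g i) - sum f I * sum g I)
      = (\<Sum>i\<in>I. \<Sum>j\<in>I. (f i - f j) * (g i - g j))"
    by (simp only: one_add_one[symmetric] algebra_simps)
       (simp add: algebra_simps sum_subtractf sum.distrib sum.swap[of "\<lambda>i j. f i * g j"] sum_distrib_left)
  also have "\<dots> \<ge> 0"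
    using assms by (intro sum_nonneg) auto
  finally show ?thesis by simp
qed

lemma one_over_alpha_minus_one_bounds:
  fixes \<alpha> :: real
  assumes "0 \<le> \<alpha>" "\<alpha> \<le> 1/2"
  shows "-2 \<le> 1 / (\<alpha> - 1)" and "1 / (\<alpha> - 1) \<le> -1"
  using assms by (auto simp: field_simps)

lemma mult_powr_neg_le_quarter:
  fixes w \<alpha> E :: real
  assumes "0 < w" "4 * E \<le> w powr \<alpha>"
  shows "E * w powr (-\<alpha>) \<le> 1/4"
proof -
  have "4 * E * w powr (-\<alpha>) \<le> w powr \<alpha> * w powr (-\<alpha>)"
    using assms by (intro mult_right_mono) auto
  then show ?thesis
    using assms(1) by (simp flip: powr_add)
qed

lemma powr_update_closed_form:
  fixes \<alpha> w w' d :: real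
  assumes "\<alpha> < 1" "0 < w" "0 < w'" and upd: "w' powr (\<alpha> - 1) = w powr (\<alpha> - 1) + d"
  shows "0 < 1 + d * w powr (1 - \<alpha>)"
    and "w' = w * (1 + d * w powr (1 - \<alpha>)) powr (1 / (\<alpha> - 1))"
proof -
  have "w powr (\<alpha> - 1) * w powr (1 - \<alpha>) = 1"
    using assms by (simp flip: powr_add)
  then have factor: "w' powr (\<alpha> - 1) = w powr (\<alpha> - 1) * (1 + d * w powr (1 - \<alpha>))"
    using upd by (simp add: algebra_simps)
  moreover have "0 < w' powr (\<alpha> - 1)" "0 < w powr (\<alpha> - 1)"
    using assms(2,3) by simp_all
  ultimately show pos: "0 < 1 + d * w powr (1 - \<alpha>)"
    by (simp add: zero_less_mult_iff)
  have "w' = (w' powr (\<alpha> - 1)) powr (1 / (\<alpha> - 1))"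
    using assms(1,3) by (simp add: powr_powr)
  also have "\<dots> = (w powr (\<alpha> - 1)) powr (1 / (\<alpha> - 1)) * (1 + d * w powr (1 - \<alpha>)) powr (1 / (\<alpha> - 1))"
    using factor pos assms by (simp add: powr_mult)
  also have "(w powr (\<alpha> - 1)) powr (1 / (\<alpha> - 1)) = w"
    using assms by (simp add: powr_powr)
  finally show "w' = w * (1 + d * w powr (1 - \<alpha>)) powr (1 / (\<alpha> - 1))" .
qed

lemma powr_update_lt_quadratic:
  fixes \<alpha> w w' d y :: real
  assumes "0 < \<alpha>" "\<alpha> \<le> 1/2" "0 < w" "0 < w'" and upd: "w' powr (\<alpha> - 1) = w powr (\<alpha> - 1) + d"
    and "y < d * w powr (1 - \<alpha>)" and "\<bar>y\<bar> \<le> 1/4"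
  shows "w' < w * (1 + y / (\<alpha> - 1) + 8 * y\<^sup>2)"
proof -
  note p = one_over_alpha_minus_one_bounds[of \<alpha>]
  have "w' = w * (1 + d * w powr (1 - \<alpha>)) powr (1 / (\<alpha> - 1))"
    using powr_update_closed_form[OF _ _ _ upd] assms by simp
  also have "\<dots> < w * (1 + y) powr (1 / (\<alpha> - 1))"
    using assms p by (intro mult_strict_left_mono powr_less_mono2_neg) auto
  also have "\<dots> \<le> w * (1 + 1 / (\<alpha> - 1) * y + 8 * y\<^sup>2)"
    using assms p by (intro mult_left_mono one_plus_powr_le_quadratic) auto
  finally show ?thesis by simp
qed

lemma powr_update_decrease_le:
  fixes \<alpha> w w' d :: real
  assumes "\<alpha> < 1" "0 < w" "0 < w'" and upd: "w' powr (\<alpha> - 1) = w powr (\<alpha> - 1) + d"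
  shows "w - w' \<le> d * w powr (2 - \<alpha>) / (1 - \<alpha>)"
proof -
  define x where "x = d * w powr (1 - \<alpha>)"
  have x: "0 < 1 + x" "w' = w * (1 + x) powr (1 / (\<alpha> - 1))"
    using powr_update_closed_form[OF assms] by (simp_all add: x_def)
  have "1 + 1 / (\<alpha> - 1) * ((1 + x) - 1) \<le> (1 + x) powr (1 / (\<alpha> - 1))"
    using x(1) assms(1) by (intro powr_ge_tangent_at_1) (auto simp: divide_nonpos_neg)
  then have "w * (1 + 1 / (\<alpha> - 1) * x) \<le> w'"
    unfolding x(2) using assms(2) by (simp add: mult_left_mono)
  moreover have "w * x = d * w powr (2 - \<alpha>)"
    using assms by (simp add: x_def powr_add[symmetric] powr_mult_base)
  ultimately show ?thesis
    using assms by (simp add: field_simps)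
qed

lemma powr_update_increase_le:
  fixes \<alpha> w w' d :: real
  assumes "0 < \<alpha>" "\<alpha> \<le> 1/2" "0 < w" "0 < w'" and upd: "w' powr (\<alpha> - 1) = w powr (\<alpha> - 1) + d"
    and "-1/2 \<le> d * w powr (1 - \<alpha>)"
  shows "w' - w \<le> 6 * w * max 0 (- (d * w powr (1 - \<alpha>)))"
proof -
  note p = one_over_alpha_minus_one_bounds[of \<alpha>]
  have "w' = w * (1 + d * w powr (1 - \<alpha>)) powr (1 / (\<alpha> - 1))"
    using powr_update_closed_form[OF _ _ _ upd] assms by simp
  also have "\<dots> \<le> w * (1 + 6 * max 0 (- (d * w powr (1 - \<alpha>))))"
    using assms p by (intro mult_left_mono one_plus_powr_le_linear) auto
  finally show ?thesis by (simp add: algebra_simps)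
qed

lemma powr_update_increase_le_scale:
  fixes \<alpha> w w' d E :: real
  assumes "0 < \<alpha>" "\<alpha> \<le> 1/2" "0 < w" "w \<le> 1" "0 < w'"
    and upd: "w' powr (\<alpha> - 1) = w powr (\<alpha> - 1) + d"
    and "-E / w - E \<le> d" "0 \<le> E" "4 * E \<le> w powr \<alpha>"
  shows "w' - w \<le> 12 * E * w powr (1 - \<alpha>)"
proof -
  have split: "w powr (1 - \<alpha>) = w * w powr (-\<alpha>)"
    using powr_mult_base[of w "-\<alpha>"] assms by simp
  have "(-d) * w powr (1 - \<alpha>) \<le> (E / w + E) * w powr (1 - \<alpha>)"
    using assms by (intro mult_right_mono) auto
  also have "\<dots> = E * w powr (-\<alpha>) + w * (E * w powr (-\<alpha>))"
    using assms by (simp add: split field_simps)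
  also have "\<dots> \<le> 2 * (E * w powr (-\<alpha>))"
    using mult_right_mono[of w 1 "E * w powr (-\<alpha>)"] assms by (simp add: mult.commute)
  finally have shift: "-(d * w powr (1 - \<alpha>)) \<le> 2 * (E * w powr (-\<alpha>))"
    by simp
  have "w' - w \<le> 6 * w * max 0 (-(d * w powr (1 - \<alpha>)))"
    using powr_update_increase_le[OF assms(1,2,3,5) upd] shift mult_powr_neg_le_quarter[of w E \<alpha>] assms
    by simp
  also have "\<dots> \<le> 6 * w * (2 * (E * w powr (-\<alpha>)))"
    using shift assms by (intro mult_left_mono) auto
  finally show ?thesis
    by (simp add: split ac_simps)
qed

lemma simplex_member_le_one:
  fixes w :: "'i \<Rightarrow> real"
  assumes "finite I" "\<And>i. i \<in> I \<Longrightarrow> 0 \<le> w i" "sum w I = 1" "i \<in> I"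
  shows "w i \<le> 1"
  using member_le_sum[of i I w] assms by auto

lemma simplex_sum_powr_bounds:
  fixes w :: "'i \<Rightarrow> real" and \<beta> :: real
  assumes "finite I" "\<And>i. i \<in> I \<Longrightarrow> 0 < w i" "sum w I = 1" "0 \<le> \<beta>" "\<beta> \<le> 1"
  shows "1 \<le> (\<Sum>i\<in>I. w i powr (1 - \<beta>))"
    and "(\<Sum>i\<in>I. w i powr (1 - \<beta>)) \<le> card I * (\<Sum>i\<in>I. w i powr (2 - \<beta>))"
proof -
  have w: "0 < w i" "w i \<le> 1" if "i \<in> I" for i
    using simplex_member_le_one[of I w i] assms that by (auto simp: less_imp_le)
  have "w i \<le> w i powr (1 - \<beta>)" if "i \<in> I" for i
    using powr_mono'[of "1 - \<beta>" 1 "w i"] w[OF that] assms by simp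
  then have "sum w I \<le> (\<Sum>i\<in>I. w i powr (1 - \<beta>))"
    by (rule sum_mono)
  then show "1 \<le> (\<Sum>i\<in>I. w i powr (1 - \<beta>))"
    using assms by simp
  have "(\<Sum>i\<in>I. w i powr (1 - \<beta>)) * sum w I \<le> card I * (\<Sum>i\<in>I. w i powr (1 - \<beta>) * w i)"
  proof (rule Chebyshev_sum_similarly_ordered)
    fix i j assume "i \<in> I" "j \<in> I"
    then have "0 < w i" "0 < w j"
      using w by auto
    then show "0 \<le> (w i powr (1 - \<beta>) - w j powr (1 - \<beta>)) * (w i - w j)"
      using \<open>\<beta> \<le> 1\<close> powr_mono2[of "1 - \<beta>" "w i" "w j"] powr_mono2[of "1 - \<beta>" "w j" "w i"]
      by (cases "w i \<le> w j") (auto simp: zero_le_mult_iff)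
  qed fact
  moreover have "w i powr (1 - \<beta>) * w i = w i powr (2 - \<beta>)" if "i \<in> I" for i
    using powr_mult_base[of "w i" "1 - \<beta>"] w[OF that] by (simp add: mult.commute)
  ultimately show "(\<Sum>i\<in>I. w i powr (1 - \<beta>)) \<le> card I * (\<Sum>i\<in>I. w i powr (2 - \<beta>))"
    using assms by simp
qed

lemma mult_le_quarter_of_sq_bound:
  fixes K E :: real
  assumes "1 \<le> m" "0 \<le> K" "0 \<le> E" "8 * m\<^sup>2 * (K\<^sup>2 + 1) * E \<le> 1"
  shows "K * E \<le> 1/4"
proof -
  have "4 * K \<le> 8 * (K\<^sup>2 + 1)"
    using sum_squares_bound[of K 1] assms(2) by (simp add: power2_eq_square)
  also have "\<dots> \<le> 8 * m\<^sup>2 * (K\<^sup>2 + 1)"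
    using assms(1) by (intro mult_right_mono) (auto simp: one_le_power)
  finally have "4 * K * E \<le> 8 * m\<^sup>2 * (K\<^sup>2 + 1) * E"
    using assms(3) by (intro mult_right_mono) auto
  then show ?thesis
    using assms(4) by linarith
qed

text \<open>The value of (a - c) * w powr (1 - \<alpha>) when the gradient term a and the normalizer c
  take their extreme values a = -E / w and c = -K * E.\<close>

definition critical_shift :: "real \<Rightarrow> real \<Rightarrow> real \<Rightarrow> real \<Rightarrow> real" where
  "critical_shift \<alpha> K E w = (K * E - E / w) * w powr (1 - \<alpha>)"

lemma critical_shift_eq:
  assumes "0 < w"
  shows "critical_shift \<alpha> K E w = K * E * w powr (1 - \<alpha>) - E * w powr (-\<alpha>)"
  using powr_mult_base[of w "-\<alpha>"] assms by (simp add: critical_shift_def field_simps)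

lemma abs_critical_shift_le:
  assumes "0 < w" "w \<le> 1" "\<alpha> \<le> 1" "0 \<le> K" "0 \<le> E"
    and "4 * E \<le> w powr \<alpha>" "K * E \<le> 1/4"
  shows "\<bar>critical_shift \<alpha> K E w\<bar> \<le> 1/4"
proof -
  have "K * E * w powr (1 - \<alpha>) \<le> K * E * 1"
    using assms by (intro mult_left_mono powr_le1) auto
  moreover have "0 \<le> K * E * w powr (1 - \<alpha>)" "0 \<le> E * w powr (-\<alpha>)"
    using assms by simp_all
  ultimately show ?thesis
    unfolding critical_shift_eq[OF assms(1)] using assms(7) mult_powr_neg_le_quarter[OF assms(1,6)]
    by (simp only: abs_le_iff) linarith
qed

lemma weighted_critical_shift_sq_le:
  assumes "0 < w" "w \<le> 1" "\<alpha> \<le> 1/2" "0 \<le> K"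
  shows "w * (critical_shift \<alpha> K E w)\<^sup>2 \<le> E\<^sup>2 * (K\<^sup>2 + 1)"
proof -
  have "w powr (1 - \<alpha>) = w * w powr (-\<alpha>)"
    using powr_mult_base[of w "-\<alpha>"] assms by simp
  moreover have "(w powr (-\<alpha>))\<^sup>2 = w powr (-2 * \<alpha>)"
    using powr_add[of w "-\<alpha>" "-\<alpha>"] by (simp add: power2_eq_square)
  moreover have "w * w powr (-2 * \<alpha>) = w powr (1 - 2 * \<alpha>)"
    using powr_mult_base[of w "-2 * \<alpha>"] assms by simp
  ultimately have eq: "w * (critical_shift \<alpha> K E w)\<^sup>2 = E\<^sup>2 * ((K * w - 1)\<^sup>2 * w powr (1 - 2 * \<alpha>))"
    using assms by (simp add: critical_shift_def power_mult_distrib field_simps power2_eq_square)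
  have "0 \<le> K * w" "(K * w)\<^sup>2 \<le> K\<^sup>2"
    using mult_left_le[of w K] assms by (auto intro: power_mono)
  then have "(K * w - 1)\<^sup>2 \<le> K\<^sup>2 + 1"
    by (simp add: power2_diff)
  moreover have "w powr (1 - 2 * \<alpha>) \<le> 1"
    using assms by (intro powr_le1) auto
  ultimately have "(K * w - 1)\<^sup>2 * w powr (1 - 2 * \<alpha>) \<le> (K\<^sup>2 + 1) * 1"
    by (intro mult_mono) auto
  then show ?thesis
    unfolding eq by (simp add: mult_left_mono)
qed

lemma sum_weighted_critical_shift_ge:
  fixes w :: "'i \<Rightarrow> real" and \<alpha> K E :: real
  assumes "finite I" "I \<noteq> {}" "\<And>i. i \<in> I \<Longrightarrow> 0 < w i" "sum w I = 1"
    and "0 \<le> \<alpha>" "\<alpha> \<le> 1" "card I \<le> K" "0 \<le> E"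
  shows "E * (K - card I) / card I \<le> (\<Sum>i\<in>I. w i * critical_shift \<alpha> K E (w i))"
proof -
  define S1 where "S1 = (\<Sum>i\<in>I. w i powr (1 - \<alpha>))"
  define S2 where "S2 = (\<Sum>i\<in>I. w i powr (2 - \<alpha>))"
  have "w i * critical_shift \<alpha> K E (w i) = E * (K * w i powr (2 - \<alpha>) - w i powr (1 - \<alpha>))"
    if "i \<in> I" for i
    using powr_mult_base[of "w i" "1 - \<alpha>"] assms(3)[OF that] by (simp add: critical_shift_def field_simps)
  then have "(\<Sum>i\<in>I. w i * critical_shift \<alpha> K E (w i))
      = (\<Sum>i\<in>I. E * (K * w i powr (2 - \<alpha>) - w i powr (1 - \<alpha>)))"
    by (rule sum.cong[OF refl])
  also have "\<dots> = E * (K * S2 - S1)"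
    by (simp add: S1_def S2_def sum_subtractf flip: sum_distrib_left)
  finally have sum_eq: "(\<Sum>i\<in>I. w i * critical_shift \<alpha> K E (w i)) = E * (K * S2 - S1)" .
  have S: "1 \<le> S1" "S1 \<le> card I * S2"
    using simplex_sum_powr_bounds[of I w \<alpha>] assms by (simp_all add: S1_def S2_def)
  have "(K - card I) * 1 \<le> (K - card I) * (card I * S2)"
    using S assms(7) by (intro mult_left_mono) auto
  then have "(K - card I) / card I \<le> (K - card I) * S2"
    using assms(1,2) by (simp add: field_simps card_gt_0_iff)
  also have "\<dots> \<le> K * S2 - S1"
    using S by (simp add: algebra_simps)
  finally have "E * ((K - card I) / card I) \<le> E * (K * S2 - S1)"
    using assms(8) by (rule mult_left_mono)
  then show ?thesis
    unfolding sum_eq by simp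
qed

lemma normalizer_upper_bound:
  fixes w w' a :: "'i \<Rightarrow> real" and \<alpha> c E :: real
  assumes "finite I" "I \<noteq> {}" "\<alpha> < 1"
    and "\<And>i. i \<in> I \<Longrightarrow> 0 < w i" "\<And>i. i \<in> I \<Longrightarrow> 0 < w' i" "sum w' I = sum w I"
    and upd: "\<And>i. i \<in> I \<Longrightarrow> w' i powr (\<alpha> - 1) = w i powr (\<alpha> - 1) + (a i - c)"
    and "\<And>i. i \<in> I \<Longrightarrow> a i \<le> E"
  shows "c \<le> E"
proof -
  have "\<exists>i\<in>I. w' i \<le> w i"
  proof (rule ccontr)
    assume "\<not> ?thesis"
    then have "sum w I < sum w' I"
      using assms(1,2) by (intro sum_strict_mono) (auto simp: not_le)
    then show False
      using assms(6) by simp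
  qed
  then obtain i where i: "i \<in> I" "w' i \<le> w i" ..
  then have "w i powr (\<alpha> - 1) \<le> w' i powr (\<alpha> - 1)"
    using assms by (intro powr_mono2') auto
  then show ?thesis
    using upd[OF i(1)] assms(8)[OF i(1)] by simp
qed

lemma normalizer_lower_bound:
  fixes I :: "'i set" and w w' a :: "'i \<Rightarrow> real" and \<alpha> c E K :: real
  defines "K \<equiv> card I + (1 - 2 * \<alpha>)"
  assumes \<alpha>: "0 < \<alpha>" "\<alpha> < 1/2" and I: "finite I" "I \<noteq> {}"
    and w: "\<And>i. i \<in> I \<Longrightarrow> 0 < w i" "sum w I = 1"
    and w': "\<And>i. i \<in> I \<Longrightarrow> 0 < w' i" "sum w' I = 1"
    and upd: "\<And>i. i \<in> I \<Longrightarrow> w' i powr (\<alpha> - 1) = w i powr (\<alpha> - 1) + (a i - c)"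
    and a_lower: "\<And>i. i \<in> I \<Longrightarrow> -E / w i \<le> a i"
    and large: "\<And>i. i \<in> I \<Longrightarrow> 4 * E \<le> w i powr \<alpha>"
    and E: "0 < E" "8 * (card I)\<^sup>2 * (K\<^sup>2 + 1) * E \<le> 1 - 2 * \<alpha>"
  shows "-K * E \<le> c"
proof (rule ccontr)
  assume c: "\<not> -K * E \<le> c"
  define y where "y i = critical_shift \<alpha> K E (w i)" for i
  have m: "1 \<le> real (card I)"
    using I by (auto simp: card_gt_0_iff Suc_le_eq)
  have K: "card I \<le> K" "0 \<le> K"
    using \<alpha> by (simp_all add: K_def)
  have w1: "0 < w i" "w i \<le> 1" if "i \<in> I" for i
    using simplex_member_le_one[of I w i] w I that by (auto simp: less_imp_le)
  have "K * E \<le> 1/4"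
    using mult_le_quarter_of_sq_bound[of "card I" K E] m K E \<alpha> by simp
  then have "w' i < w i * (1 + y i / (\<alpha> - 1) + 8 * (y i)\<^sup>2)" if i: "i \<in> I" for i
    using powr_update_lt_quadratic[OF \<alpha>(1) _ w(1)[OF i] w'(1)[OF i] upd[OF i]]
      abs_critical_shift_le[of "w i" \<alpha> K E] w1[OF i] large[OF i] K E \<alpha> a_lower[OF i] c
    by (auto simp: y_def critical_shift_def intro!: mult_strict_right_mono)
  then have "sum w' I < (\<Sum>i\<in>I. w i * (1 + y i / (\<alpha> - 1) + 8 * (y i)\<^sup>2))"
    using I by (intro sum_strict_mono) auto
  also have "\<dots> = 1 + (\<Sum>i\<in>I. w i * y i) / (\<alpha> - 1) + 8 * (\<Sum>i\<in>I. w i * (y i)\<^sup>2)"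
    using w(2) by (simp add: algebra_simps sum.distrib sum_distrib_left sum_divide_distrib)
  also have "(\<Sum>i\<in>I. w i * y i) / (\<alpha> - 1) \<le> - (E * (1 - 2 * \<alpha>) / card I)"
  proof -
    have lower: "E * (1 - 2 * \<alpha>) / card I \<le> (\<Sum>i\<in>I. w i * y i)"
      using sum_weighted_critical_shift_ge[of I w \<alpha> K E] I w K E \<alpha> by (simp add: y_def K_def)
    moreover have "0 \<le> E * (1 - 2 * \<alpha>) / card I"
      using E \<alpha> by simp
    ultimately have "(\<Sum>i\<in>I. w i * y i) * (1 / (\<alpha> - 1)) \<le> (\<Sum>i\<in>I. w i * y i) * (-1)"
      using one_over_alpha_minus_one_bounds[of \<alpha>] \<alpha> by (intro mult_left_mono) auto
    with lower show ?thesis by simp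
  qed
  also have "8 * (\<Sum>i\<in>I. w i * (y i)\<^sup>2) \<le> 8 * (card I * (E\<^sup>2 * (K\<^sup>2 + 1)))"
    using sum_mono[of I "\<lambda>i. w i * (y i)\<^sup>2" "\<lambda>_. E\<^sup>2 * (K\<^sup>2 + 1)"]
      weighted_critical_shift_sq_le w1 K \<alpha> by (simp add: y_def)
  finally have "E * (1 - 2 * \<alpha>) / card I < 8 * (card I * (E\<^sup>2 * (K\<^sup>2 + 1)))"
    using w' by simp
  moreover have "8 * (card I)\<^sup>2 * (K\<^sup>2 + 1) * E * E \<le> (1 - 2 * \<alpha>) * E"
    using E by (intro mult_right_mono) auto
  ultimately show False
    using m E by (simp add: field_simps power2_eq_square)
qed

lemma mirror_step_bounds:
  fixes I :: "'i set" and w w' a :: "'i \<Rightarrow> real" and \<alpha> c E K :: real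
  defines "K \<equiv> card I + (1 - 2 * \<alpha>)"
  assumes \<alpha>: "0 < \<alpha>" "\<alpha> < 1/2" and I: "finite I" "I \<noteq> {}"
    and w: "\<And>i. i \<in> I \<Longrightarrow> 0 < w i" "sum w I = 1"
    and w': "\<And>i. i \<in> I \<Longrightarrow> 0 < w' i" "sum w' I = 1"
    and upd: "\<And>i. i \<in> I \<Longrightarrow> w' i powr (\<alpha> - 1) = w i powr (\<alpha> - 1) + (a i - c)"
    and a: "\<And>i. i \<in> I \<Longrightarrow> -E / w i \<le> a i" "\<And>i. i \<in> I \<Longrightarrow> a i \<le> E"
    and large: "\<And>i. i \<in> I \<Longrightarrow> 4 * E \<le> w i powr \<alpha>"
    and E: "0 < E" "8 * (card I)\<^sup>2 * (K\<^sup>2 + 1) * E \<le> 1 - 2 * \<alpha>"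
    and i: "i \<in> I"
  shows "-32 * w i powr (1 - \<alpha>) * E \<le> w i - w' i"
    and "w i - w' i \<le> 2 * w i powr (2 - \<alpha>) * (card I + 1) * E"
    and "w' i powr (\<alpha> - 1) \<le> w i powr (\<alpha> - 1) + (1 + K) * E"
proof -
  have c: "-K * E \<le> c" "c \<le> E"
    using normalizer_lower_bound[OF \<alpha> I w w' upd a(1) large E[unfolded K_def]]
      normalizer_upper_bound[where w = w and w' = w' and a = a, OF I _ w(1) w'(1) _ upd a(2)]
      \<alpha> w(2) w'(2)
    by (simp_all add: K_def)
  have wi: "0 < w i" "w i \<le> 1" "0 < w' i"
    using simplex_member_le_one[of I w i] w w' I i by (auto simp: less_imp_le)
  define d where "d = a i - c"
  have upd_i: "w' i powr (\<alpha> - 1) = w i powr (\<alpha> - 1) + d"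
    using upd[OF i] by (simp add: d_def)
  have d: "-E / w i - E \<le> d" "d \<le> (1 + K) * E"
    using a[OF i] c by (simp_all add: d_def algebra_simps)
  then show "w' i powr (\<alpha> - 1) \<le> w i powr (\<alpha> - 1) + (1 + K) * E"
    using upd_i by simp
  have "w i - w' i \<le> d * w i powr (2 - \<alpha>) / (1 - \<alpha>)"
    using powr_update_decrease_le[OF _ wi(1,3) upd_i] \<alpha> by simp
  also have "\<dots> \<le> (1 + K) / (1 - \<alpha>) * E * w i powr (2 - \<alpha>)"
    using d(2) \<alpha> by (simp add: divide_right_mono mult_right_mono)
  also have "\<dots> \<le> 2 * (card I + 1) * E * w i powr (2 - \<alpha>)"
  proof -
    have "1 + K \<le> 2 * (card I + 1) * (1 - \<alpha>)"
      using \<alpha> mult_left_mono[of 0 "1 - 2 * \<alpha>" "card I"] by (simp add: K_def algebra_simps)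
    then have "(1 + K) / (1 - \<alpha>) \<le> 2 * (card I + 1)"
      using \<alpha> by (simp add: divide_le_eq)
    then show ?thesis
      using E(1) by (intro mult_right_mono) auto
  qed
  finally show "w i - w' i \<le> 2 * w i powr (2 - \<alpha>) * (card I + 1) * E"
    by (simp add: algebra_simps)
  have "w' i - w i \<le> 12 * E * w i powr (1 - \<alpha>)"
    using powr_update_increase_le_scale[OF \<alpha>(1) _ wi upd_i d(1) _ large[OF i]] \<alpha> E(1) by simp
  moreover have "0 \<le> E * w i powr (1 - \<alpha>)"
    using E(1) by simp
  ultimately show "-32 * w i powr (1 - \<alpha>) * E \<le> w i - w' i"
    by (simp add: algebra_simps)
qed

definition step_scale :: "real \<Rightarrow> nat \<Rightarrow> nat \<Rightarrow> real" where
  "step_scale \<alpha> m T = 1 / (sqrt (real T) * real m powr ((1 + \<alpha>) / 2))"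

lemma alg_eta_mult_alg_gamma:
  assumes "1 \<le> n" "1 < T"
  shows "alg_eta \<alpha> m n T * alg_gamma n T = step_scale \<alpha> m T"
  using assms by (simp add: alg_eta_def alg_gamma_def step_scale_def field_simps)

lemma step_scale_pos:
  assumes "1 \<le> m" "1 \<le> T"
  shows "0 < step_scale \<alpha> m T"
  using assms by (simp add: step_scale_def)

lemma step_scale_le:
  assumes "0 \<le> \<alpha>"
  shows "step_scale \<alpha> m T \<le> 1 / sqrt (real T)"
proof (cases "m = 0 \<or> T = 0")
  case False
  then have "1 \<le> real m powr ((1 + \<alpha>) / 2)"
    using assms by (intro ge_one_powr_ge_zero) auto
  then show ?thesis
    using False by (simp add: step_scale_def field_simps)
qed (auto simp: step_scale_def)

lemma potential_le_sqrt:
  fixes \<alpha> :: real and m T :: nat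
  assumes \<alpha>: "0 < \<alpha>" "\<alpha> < 1/2" and m: "1 \<le> m" and T: "40 * m \<le> T"
  shows "real m powr (1 - \<alpha>) + T * (1 + (m + (1 - 2 * \<alpha>))) * step_scale \<alpha> m T
    \<le> (10 * sqrt m) powr (1 - \<alpha>) * sqrt T"
proof -
  define s where "s = sqrt T"
  define M where "M = real m powr ((1 + \<alpha>) / 2)"
  have s: "0 < s" "T = s * s"
    using m T by (simp_all add: s_def)
  have M: "1 \<le> M"
    unfolding M_def using m \<alpha> by (intro ge_one_powr_ge_zero) auto
  have sqrt_m: "sqrt m = m powr (1/2)"
    using m by (simp add: powr_half_sqrt)
  have "sqrt m \<le> sqrt ((0.16 * s)\<^sup>2)"
    using T s by (intro real_sqrt_le_mono) (simp add: power2_eq_square)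
  then have sqrt_m_le: "sqrt m \<le> 0.16 * s"
    using s by simp
  have "m powr (1 - \<alpha>) * M = m powr (1 + (1 - \<alpha>) / 2)"
    unfolding M_def by (simp add: powr_add[symmetric] field_simps)
  also have "\<dots> \<le> m powr (1 + 1/2)"
    using m \<alpha> by (intro powr_mono) auto
  also have "\<dots> = m * sqrt m"
    using powr_mult_base[of "real m" "1/2"] by (simp add: sqrt_m)
  also have "\<dots> \<le> m * (0.16 * s)"
    using sqrt_m_le by (intro mult_left_mono) auto
  finally have first: "m powr (1 - \<alpha>) \<le> 0.16 * m * s / M"
    using M by (simp add: field_simps)
  have "T * (1 + (m + (1 - 2 * \<alpha>))) * step_scale \<alpha> m T = s * (1 + (m + (1 - 2 * \<alpha>))) / M"
    using s by (simp add: step_scale_def s_def[symmetric] M_def[symmetric])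
  also have "\<dots> \<le> s * (3 * m) / M"
    using m s \<alpha> M by (intro divide_right_mono mult_left_mono) auto
  finally have "m powr (1 - \<alpha>) + T * (1 + (m + (1 - 2 * \<alpha>))) * step_scale \<alpha> m T \<le> 3.16 * m * s / M"
    using first by (simp add: field_simps)
  also have "\<dots> \<le> 10 powr (1 - \<alpha>) * m * s / M"
  proof -
    have "3.16 \<le> sqrt (10::real)"
      by (rule real_le_rsqrt) (simp add: power2_eq_square)
    also have "\<dots> \<le> 10 powr (1 - \<alpha>)"
      using \<alpha> powr_mono[of "1/2" "1 - \<alpha>" 10] by (simp add: powr_half_sqrt)
    finally show ?thesis
      using m s M by (intro divide_right_mono mult_right_mono) auto
  qed
  also have "\<dots> = (10 * sqrt m) powr (1 - \<alpha>) * s"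
    unfolding M_def sqrt_m using m
    by (simp add: powr_mult powr_powr field_simps flip: powr_add)
  finally show ?thesis
    by (simp add: s_def)
qed

lemma weight_ge_of_potential_le:
  fixes \<alpha> w :: real and m T :: nat
  assumes "\<alpha> < 1" "0 < w" "1 \<le> m" "1 \<le> T"
    and "w powr (\<alpha> - 1) \<le> (10 * sqrt m) powr (1 - \<alpha>) * sqrt T"
  shows "1 / (10 * sqrt m) * T powr (1 / (2 * (\<alpha> - 1))) \<le> w"
proof -
  have "((10 * sqrt m) powr (1 - \<alpha>) * sqrt T) powr (1 / (\<alpha> - 1))
      = (10 * sqrt m) powr ((1 - \<alpha>) * (1 / (\<alpha> - 1))) * T powr (1/2 * (1 / (\<alpha> - 1)))"
    using assms by (simp add: powr_mult powr_powr powr_half_sqrt[symmetric])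
  also have "(1 - \<alpha>) * (1 / (\<alpha> - 1)) = -1"
    using assms by (simp add: field_simps)
  also have "1/2 * (1 / (\<alpha> - 1)) = 1 / (2 * (\<alpha> - 1))"
    by simp
  finally have "1 / (10 * sqrt m) * T powr (1 / (2 * (\<alpha> - 1)))
      = ((10 * sqrt m) powr (1 - \<alpha>) * sqrt T) powr (1 / (\<alpha> - 1))"
    using assms by (simp add: powr_minus_divide)
  also have "\<dots> \<le> (w powr (\<alpha> - 1)) powr (1 / (\<alpha> - 1))"
    using assms by (intro powr_mono2') auto
  also have "\<dots> = w"
    using assms by (simp add: powr_powr)
  finally show ?thesis .
qed

lemma four_step_scale_le_powr:
  fixes \<alpha> w :: real and m T :: nat
  assumes "0 < \<alpha>" "\<alpha> \<le> 1/2" "1 \<le> m" "1 \<le> T"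
    and T: "4 * sqrt (10 * sqrt m) \<le> T powr (1/2 + 1 / (4 * (\<alpha> - 1)))"
    and w: "1 / (10 * sqrt m) * T powr (1 / (2 * (\<alpha> - 1))) \<le> w" "w \<le> 1"
  shows "4 * step_scale \<alpha> m T \<le> w powr \<alpha>"
proof -
  define C where "C = sqrt (10 * sqrt m)"
  have C: "0 < C"
    using assms by (simp add: C_def)
  have "4 * step_scale \<alpha> m T \<le> 4 / sqrt T"
    using step_scale_le[of \<alpha> m T] assms by simp
  also have "\<dots> \<le> T powr (1 / (4 * (\<alpha> - 1))) / C"
  proof -
    have "T powr (1/2 + 1 / (4 * (\<alpha> - 1))) = sqrt T * T powr (1 / (4 * (\<alpha> - 1)))"
      using assms by (simp add: powr_add powr_half_sqrt)
    then show ?thesis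
      using T C assms by (simp add: C_def field_simps)
  qed
  also have "\<dots> = (1 / (10 * sqrt m) * T powr (1 / (2 * (\<alpha> - 1)))) powr (1/2)"
  proof -
    have "(T powr (1 / (2 * (\<alpha> - 1)))) powr (1/2) = T powr (1 / (4 * (\<alpha> - 1)))"
      by (simp add: powr_powr)
    then show ?thesis
      using assms by (simp add: C_def powr_mult powr_half_sqrt real_sqrt_divide)
  qed
  also have "\<dots> \<le> w powr (1/2)"
    using w by (intro powr_mono2) auto
  also have "\<dots> \<le> w powr \<alpha>"
    using assms w powr_mono'[of \<alpha> "1/2" w] order_trans[OF _ w(1)] by simp
  finally show ?thesis .
qed

definition large_horizon :: "real \<Rightarrow> nat \<Rightarrow> nat \<Rightarrow> bool" where
  "large_horizon \<alpha> m T \<longleftrightarrow> 1 < T \<and> 40 * m \<le> T \<and>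
     8 * (real m)\<^sup>2 * ((real m + (1 - 2 * \<alpha>))\<^sup>2 + 1) * step_scale \<alpha> m T \<le> 1 - 2 * \<alpha> \<and>
     4 * sqrt (10 * sqrt m) \<le> real T powr (1/2 + 1 / (4 * (\<alpha> - 1)))"

lemma eventually_large_horizon:
  fixes \<alpha> :: real
  assumes "0 < \<alpha>" "\<alpha> < 1/2"
  shows "eventually (large_horizon \<alpha> m) sequentially"
proof -
  define A where "A = 8 * (real m)\<^sup>2 * ((real m + (1 - 2 * \<alpha>))\<^sup>2 + 1)"
  define C where "C = 4 * sqrt (10 * sqrt m)"
  define q where "q = 1/2 + 1 / (4 * (\<alpha> - 1))"
  have q: "0 < q"
    using assms by (simp add: q_def field_simps)
  have "eventually (\<lambda>T. A / (1 - 2 * \<alpha>) \<le> sqrt (real T)) sequentially"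
    using filterlim_compose[OF sqrt_at_top filterlim_real_sequentially] by (simp add: filterlim_at_top)
  moreover have "eventually (\<lambda>T. C powr (1 / q) \<le> real T) sequentially"
    using filterlim_real_sequentially by (simp add: filterlim_at_top)
  moreover have "eventually (\<lambda>T. 1 < T \<and> 40 * m \<le> T) sequentially"
    by (intro eventually_conj eventually_gt_at_top eventually_ge_at_top)
  ultimately show ?thesis
  proof eventually_elim
    case (elim T)
    have "A * step_scale \<alpha> m T \<le> A * (1 / sqrt T)"
      using step_scale_le[of \<alpha> m T] assms by (intro mult_left_mono) (auto simp: A_def)
    also have "\<dots> \<le> 1 - 2 * \<alpha>"
      using elim assms by (simp add: field_simps)
    finally have "A * step_scale \<alpha> m T \<le> 1 - 2 * \<alpha>" .
    moreover have "C \<le> real T powr q"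
      using powr_mono2[OF _ _ elim(2), of q] q by (simp add: C_def powr_powr)
    ultimately show ?case
      using elim by (simp add: large_horizon_def A_def C_def q_def)
  qed
qed

lemma eta_cand_bounds:
  fixes \<alpha> \<eta> :: real and w :: "nat \<Rightarrow> nat \<Rightarrow> real"
  assumes "0 < \<alpha>" "\<alpha> \<le> 1" "1 \<le> m" "0 \<le> \<eta>"
    and "\<And>i. i \<in> {1..m} \<Longrightarrow> 0 < w s i \<and> w s i \<le> 1"
  shows "0 \<le> eta_cand \<alpha> m \<eta> w s" and "eta_cand \<alpha> m \<eta> w s \<le> \<eta>"
proof -
  have ne: "{1..m} \<noteq> {}"
    using assms by simp
  have "0 \<le> Min ((\<lambda>i. w s i) ` {1..m})"
    using ne assms(5) by (auto intro: less_imp_le)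
  then show "0 \<le> eta_cand \<alpha> m \<eta> w s"
    using assms by (simp add: eta_cand_def)
  have "Min ((\<lambda>i. w s i powr \<alpha>) ` {1..m}) \<in> (\<lambda>i. w s i powr \<alpha>) ` {1..m}"
    using ne by (intro Min_in) auto
  then obtain i where i: "i \<in> {1..m}" "Min ((\<lambda>i. w s i powr \<alpha>) ` {1..m}) = w s i powr \<alpha>"
    by blast
  have "Min ((\<lambda>i. w s i) ` {1..m}) \<le> w s i"
    using i by simp
  also have "\<dots> \<le> w s i powr \<alpha>"
    using powr_mono'[of \<alpha> 1 "w s i"] assms(1,2) assms(5)[OF i(1)] by simp
  finally show "eta_cand \<alpha> m \<eta> w s \<le> \<eta>"
    using i by (auto simp: eta_cand_def)
qed

locale alg1_small_gradient_run =
  fixes \<alpha> :: real and m n T :: nat and P :: "nat \<Rightarrow> nat \<Rightarrow> nat \<Rightarrow> real"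
    and J :: "nat \<Rightarrow> nat" and w :: "nat \<Rightarrow> nat \<Rightarrow> real"
  assumes alpha: "0 < \<alpha>" "\<alpha> < 1/2"
    and m_pos: "1 \<le> m"
    and horizon: "large_horizon \<alpha> m T"
    and run: "alg1_run \<alpha> m n T P J w"
    and small: "small_gradient m n T P J w"
begin

abbreviation E :: real where "E \<equiv> step_scale \<alpha> m T"

lemma horizon_bounds:
  shows "1 < T" "40 * m \<le> T"
    and "8 * (real m)\<^sup>2 * ((real m + (1 - 2 * \<alpha>))\<^sup>2 + 1) * E \<le> 1 - 2 * \<alpha>"
    and "4 * sqrt (10 * sqrt m) \<le> real T powr (1/2 + 1 / (4 * (\<alpha> - 1)))"
  using horizon by (simp_all add: large_horizon_def)

lemma E_pos: "0 < E"
  using step_scale_pos m_pos horizon_bounds(1) by simp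

lemma alg_eta_mult_alg_gamma_eq: "alg_eta \<alpha> m n T * alg_gamma n T = E"
proof (rule alg_eta_mult_alg_gamma)
  have "J 1 \<in> {1..n}"
    using run horizon_bounds(1) by (simp add: alg1_run_def)
  then show "1 \<le> n" by simp
qed (use horizon_bounds(1) in simp)

lemma initial_weight: "j \<in> {1..m} \<Longrightarrow> w 1 j = 1 / m"
  using run by (simp add: alg1_run_def)

lemma weight_simplex:
  assumes "t \<in> {1..Suc T}"
  shows "\<And>j. j \<in> {1..m} \<Longrightarrow> 0 < w t j" and "sum (w t) {1..m} = 1"
proof -
  have "(\<forall>j\<in>{1..m}. 0 < w t j) \<and> sum (w t) {1..m} = 1"
  proof (cases "t = 1")
    case True
    then show ?thesis
      using initial_weight m_pos by simp
  next
    case False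
    then have "t - 1 \<in> {1..T}" "t = Suc (t - 1)"
      using assms by auto
    then show ?thesis
      using run unfolding alg1_run_def in_simplex_def by metis
  qed
  then show "\<And>j. j \<in> {1..m} \<Longrightarrow> 0 < w t j" "sum (w t) {1..m} = 1"
    by auto
qed

lemma weight_le_one: "t \<in> {1..Suc T} \<Longrightarrow> j \<in> {1..m} \<Longrightarrow> w t j \<le> 1"
  using simplex_member_le_one[of "{1..m}" "w t" j] weight_simplex[of t] by (auto simp: less_imp_le)

lemma eta_t_bounds:
  assumes "t \<in> {1..T}"
  shows "0 \<le> eta_t \<alpha> m (alg_eta \<alpha> m n T) w t" and "eta_t \<alpha> m (alg_eta \<alpha> m n T) w t \<le> alg_eta \<alpha> m n T"
proof -
  have "0 \<le> alg_eta \<alpha> m n T"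
    using horizon_bounds(1) by (simp add: alg_eta_def)
  then have cand: "0 \<le> eta_cand \<alpha> m (alg_eta \<alpha> m n T) w s"
      "eta_cand \<alpha> m (alg_eta \<alpha> m n T) w s \<le> alg_eta \<alpha> m n T"
    if "s \<in> {1..T}" for s
    using eta_cand_bounds[of \<alpha> m _ w s] alpha m_pos weight_simplex(1) weight_le_one that by auto
  then show "0 \<le> eta_t \<alpha> m (alg_eta \<alpha> m n T) w t"
    using assms unfolding eta_t_def by (intro Min.boundedI) auto
  have "eta_t \<alpha> m (alg_eta \<alpha> m n T) w t \<le> eta_cand \<alpha> m (alg_eta \<alpha> m n T) w 1"
    using assms unfolding eta_t_def by (intro Min_le) auto
  then show "eta_t \<alpha> m (alg_eta \<alpha> m n T) w t \<le> alg_eta \<alpha> m n T"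
    using cand(2)[of 1] assms by simp
qed

abbreviation scaled_gradient :: "nat \<Rightarrow> nat \<Rightarrow> real" where
  "scaled_gradient t j \<equiv> eta_t \<alpha> m (alg_eta \<alpha> m n T) w t * loss_grad m n (P t) (J t) (w t) j"

lemma scaled_gradient_bounds:
  assumes "t \<in> {1..T}" "j \<in> {1..m}"
  shows "-E / w t j \<le> scaled_gradient t j" and "scaled_gradient t j \<le> E"
proof -
  define e g \<eta> \<gamma> where "e = eta_t \<alpha> m (alg_eta \<alpha> m n T) w t"
    and "g = loss_grad m n (P t) (J t) (w t) j" and "\<eta> = alg_eta \<alpha> m n T" and "\<gamma> = alg_gamma n T"
  have e: "0 \<le> e" "e \<le> \<eta>"
    using eta_t_bounds[OF assms(1)] by (simp_all add: e_def \<eta>_def)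
  have g: "-\<gamma> / w t j \<le> g" "g \<le> \<gamma>"
    using small assms by (simp_all add: small_gradient_def g_def \<gamma>_def)
  have "0 \<le> \<gamma>" "0 < w t j"
    using horizon_bounds(1) weight_simplex(1)[of t j] assms by (simp_all add: \<gamma>_def alg_gamma_def)
  then have "\<eta> * (-\<gamma> / w t j) \<le> e * (-\<gamma> / w t j)" "e * \<gamma> \<le> \<eta> * \<gamma>"
    using e by (simp_all add: mult_right_mono divide_right_mono)
  moreover have "e * (-\<gamma> / w t j) \<le> e * g" "e * g \<le> e * \<gamma>"
    using e g by (intro mult_left_mono; simp)+
  moreover have "\<eta> * \<gamma> = E"
    using alg_eta_mult_alg_gamma_eq by (simp add: \<eta>_def \<gamma>_def)
  ultimately show "-E / w t j \<le> scaled_gradient t j" "scaled_gradient t j \<le> E"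
    by (simp_all add: e_def g_def)
qed

lemma mirror_update:
  assumes "t \<in> {1..T}"
  obtains c where "\<And>j. j \<in> {1..m} \<Longrightarrow>
    w (Suc t) j powr (\<alpha> - 1) = w t j powr (\<alpha> - 1) + (scaled_gradient t j - c)"
proof -
  obtain c where "\<forall>j\<in>{1..m}. - (w (Suc t) j powr (\<alpha> - 1))
      = - (w t j powr (\<alpha> - 1)) - scaled_gradient t j + c"
    using run assms unfolding alg1_run_def by blast
  then show ?thesis
    using that[of c] by fastforce
qed

lemma step_bounds:
  assumes t: "t \<in> {1..T}" and large: "\<And>j. j \<in> {1..m} \<Longrightarrow> 4 * E \<le> w t j powr \<alpha>"
    and j: "j \<in> {1..m}"
  shows "-32 * w t j powr (1 - \<alpha>) * E \<le> w t j - w (Suc t) j"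
    and "w t j - w (Suc t) j \<le> 2 * w t j powr (2 - \<alpha>) * (m + 1) * E"
    and "w (Suc t) j powr (\<alpha> - 1) \<le> w t j powr (\<alpha> - 1) + (1 + (m + (1 - 2 * \<alpha>))) * E"
proof -
  obtain c where upd: "\<And>j. j \<in> {1..m} \<Longrightarrow>
      w (Suc t) j powr (\<alpha> - 1) = w t j powr (\<alpha> - 1) + (scaled_gradient t j - c)"
    using mirror_update[OF t] by blast
  have "t \<in> {1..Suc T}" "Suc t \<in> {1..Suc T}"
    using t by auto
  note step = mirror_step_bounds[of \<alpha> "{1..m}" "w t" "w (Suc t)" "scaled_gradient t" c E j,
      OF alpha _ _ weight_simplex[OF this(1)] weight_simplex[OF this(2)] upd
      scaled_gradient_bounds[OF t] large E_pos _ j]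
  show "-32 * w t j powr (1 - \<alpha>) * E \<le> w t j - w (Suc t) j"
    and "w t j - w (Suc t) j \<le> 2 * w t j powr (2 - \<alpha>) * (m + 1) * E"
    and "w (Suc t) j powr (\<alpha> - 1) \<le> w t j powr (\<alpha> - 1) + (1 + (m + (1 - 2 * \<alpha>))) * E"
    using step m_pos horizon_bounds(3) by auto
qed

lemma weight_bounds_of_potential:
  assumes t: "t \<in> {1..T}" and j: "j \<in> {1..m}"
    and potential: "w t j powr (\<alpha> - 1) \<le> m powr (1 - \<alpha>) + T * (1 + (m + (1 - 2 * \<alpha>))) * E"
  shows "1 / (10 * sqrt m) * T powr (1 / (2 * (\<alpha> - 1))) \<le> w t j" and "4 * E \<le> w t j powr \<alpha>"
proof -
  have w: "0 < w t j" "w t j \<le> 1"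
    using weight_simplex(1) weight_le_one t j by auto
  have T: "1 \<le> T"
    using horizon_bounds(1) by simp
  show floor: "1 / (10 * sqrt m) * T powr (1 / (2 * (\<alpha> - 1))) \<le> w t j"
    using weight_ge_of_potential_le[OF _ w(1) m_pos T] alpha
      order_trans[OF potential potential_le_sqrt[OF alpha m_pos horizon_bounds(2)]]
    by simp
  show "4 * E \<le> w t j powr \<alpha>"
    using four_step_scale_le_powr[OF alpha(1) _ m_pos T horizon_bounds(4) floor w(2)] alpha by simp
qed

lemma potential_bound:
  assumes "t \<in> {1..T}" "j \<in> {1..m}"
  shows "w t j powr (\<alpha> - 1) \<le> m powr (1 - \<alpha>) + (real t - 1) * (1 + (m + (1 - 2 * \<alpha>))) * E"
  using assms
proof (induction t arbitrary: j)
  case (Suc t)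
  show ?case
  proof (cases "t = 0")
    case True
    then show ?thesis
      using initial_weight[OF Suc.prems(2)] m_pos by (simp add: powr_divide powr_minus_divide[symmetric])
  next
    case False
    then have t: "t \<in> {1..T}"
      using Suc.prems(1) by auto
    have KE: "0 \<le> (1 + (m + (1 - 2 * \<alpha>))) * E"
      using alpha E_pos by simp
    have "4 * E \<le> w t i powr \<alpha>" if i: "i \<in> {1..m}" for i
    proof (rule weight_bounds_of_potential(2)[OF t i])
      have "(real t - 1) * (1 + (m + (1 - 2 * \<alpha>))) * E \<le> T * (1 + (m + (1 - 2 * \<alpha>))) * E"
        using t KE by (simp add: mult.assoc mult_right_mono)
      then show "w t i powr (\<alpha> - 1) \<le> m powr (1 - \<alpha>) + T * (1 + (m + (1 - 2 * \<alpha>))) * E"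
        using Suc.IH[OF t i] by linarith
    qed
    then show ?thesis
      using step_bounds(3)[OF t _ Suc.prems(2)] Suc.IH[OF t Suc.prems(2)] by (simp add: algebra_simps)
  qed
qed simp

lemma weight_bounds:
  assumes "t \<in> {1..T}" "j \<in> {1..m}"
  shows "1 / (10 * sqrt m) * T powr (1 / (2 * (\<alpha> - 1))) \<le> w t j" and "4 * E \<le> w t j powr \<alpha>"
proof -
  have "(real t - 1) * (1 + (m + (1 - 2 * \<alpha>))) * E \<le> T * (1 + (m + (1 - 2 * \<alpha>))) * E"
    using assms alpha E_pos by (intro mult_right_mono) auto
  then have "w t j powr (\<alpha> - 1) \<le> m powr (1 - \<alpha>) + T * (1 + (m + (1 - 2 * \<alpha>))) * E"
    using potential_bound[OF assms] by linarith
  then show "1 / (10 * sqrt m) * T powr (1 / (2 * (\<alpha> - 1))) \<le> w t j" "4 * E \<le> w t j powr \<alpha>"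
    using weight_bounds_of_potential[OF assms] by auto
qed

lemma corollary1_bounds:
  assumes "i \<in> {1..m}" "t \<in> {1..T}"
  shows "w t i powr \<alpha> \<ge> 4 * alg_eta \<alpha> m n T * alg_gamma n T \<and>
       w t i \<ge> 1 / (10 * sqrt (real m)) * real T powr (1 / (2 * (\<alpha> - 1))) \<and>
       - 32 * w t i powr (1 - \<alpha>) * alg_eta \<alpha> m n T * alg_gamma n T \<le> w t i - w (Suc t) i \<and>
       w t i - w (Suc t) i \<le> 2 * w t i powr (2 - \<alpha>) * (real m + 1) * alg_eta \<alpha> m n T * alg_gamma n T"
  using weight_bounds[OF assms(2)] step_bounds(1,2)[OF assms(2) weight_bounds(2)[OF assms(2)] assms(1)]
    alg_eta_mult_alg_gamma_eq assms(1)
  by (simp add: mult.assoc add.commute)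

end

theorem corollary1:
  fixes \<alpha> :: real and m n :: nat
  assumes "0 < \<alpha>" and "\<alpha> < 1/2"
  shows "\<exists>T0::nat. \<forall>T\<ge>T0. \<forall>P J w.
    alg1_run \<alpha> m n T P J w \<and> small_gradient m n T P J w \<longrightarrow>
    (\<forall>i\<in>{1..m}. \<forall>t\<in>{1..T}.
       w t i powr \<alpha> \<ge> 4 * alg_eta \<alpha> m n T * alg_gamma n T \<and>
       w t i \<ge> 1 / (10 * sqrt (real m)) * real T powr (1 / (2 * (\<alpha> - 1))) \<and>
       - 32 * w t i powr (1 - \<alpha>) * alg_eta \<alpha> m n T * alg_gamma n T \<le> w t i - w (Suc t) i \<and>
       w t i - w (Suc t) i \<le> 2 * w t i powr (2 - \<alpha>) * (real m + 1) * alg_eta \<alpha> m n T * alg_gamma n T)"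
proof -
  obtain T0 where T0: "\<And>T. T0 \<le> T \<Longrightarrow> large_horizon \<alpha> m T"
    using eventually_large_horizon[OF assms] by (auto simp: eventually_sequentially)
  show ?thesis
    using assms T0
    by (intro exI[of _ T0] allI impI ballI alg1_small_gradient_run.corollary1_bounds
        alg1_small_gradient_run.intro) auto
qed

end
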